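(* Let $1\le p<\infty$, $q=p(p-1)^{-1}$, $\beta\in\mathbb{R}$, let $r\ge2$ be a natural number, and let $\omega$ be a function of the modulus of continuity type. Suppose there is a constant $C$ such that for all integers $n\ge0$, $$\left\{\int_{0}^{\frac{\pi}{r(n+1)}}\left(\frac{\omega(t)}{t\sin^{\beta}\frac{rt}{2}}\right)^{q}dt\right\}^{1/q}\le C(n+1)^{\beta+1/p}\,\omega\!\left(\frac{\pi}{n+1}\right).$$ Then for every $m\in\{0,1,\dots,[r/2]-1\}$ there is a constant $C'$ such that for all $n\ge0$, $$\left\{\int_{\frac{2(m+1)\pi}{r}-\frac{\pi}{r(n+1)}}^{\frac{2(m+1)\pi}{r}}\left(\frac{\omega(t)}{t\left|\sin\frac{rt}{2}\right|^{\beta}}\right)^{q}dt\right\}^{1/q}\le C'(n+1)^{\beta+1/p}\,\omega\!\left(\frac{\pi}{n+1}\right).$$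
   Context: A function of the modulus of continuity type is a nondecreasing continuous function $\omega$ on $[0,2\pi]$ with $\omega(0)=0$ and $\omega(\delta_1+\delta_2)\le\omega(\delta_1)+\omega(\delta_2)$ whenever $0\le\delta_1\le\delta_2\le\delta_1+\delta_2\le2\pi$. $[y]$ is the integer part of $y$. When $p=1$ (so $q=\infty$), $\{\int g^q\}^{1/q}$ is read as the essential supremum of $g$. *)

theory Defs
  imports "HOL-Analysis.Analysis" "HOL-Probability.Essential_Supremum"
begin

definition modulus_type :: "(real \<Rightarrow> real) \<Rightarrow> bool" where
  "modulus_type \<omega> \<longleftrightarrow>
     mono_on {0..2*pi} \<omega> \<and> continuous_on {0..2*pi} \<omega> \<and> \<omega> 0 = 0 \<and>
     (\<forall>d1 d2. 0 \<le> d1 \<and> d1 \<le> d2 \<and> d1 + d2 \<le> 2*pi \<longrightarrow> \<omega> (d1 + d2) \<le> \<omega> d1 + \<omega> d2)"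

definition Lq_norm :: "real \<Rightarrow> real set \<Rightarrow> (real \<Rightarrow> real) \<Rightarrow> ennreal" where
  "Lq_norm p S g =
     (if p = 1 then esssup lborel (\<lambda>t. ennreal (g t) * indicator S t)
      else (let q = p / (p - 1);
                I = (\<integral>\<^sup>+ t. ennreal (g t powr q) * indicator S t \<partial>lborel)
            in if I = \<infinity> then \<infinity> else ennreal (enn2real I powr (1 / q))))"

end

theory Submission
  imports Defs
begin

text \<open>Substituting t = t0 - s with t0 = 2(m+1)pi/r reflects the window
  [t0 - a, t0] onto [0, a] and preserves the Lebesgue measure. Since
  r t0 / 2 = (m+1)pi, the weight satisfies |sin (r t / 2)| = sin (r s / 2), and since
  s \<le> t \<le> pi the subadditivity of \<omega> gives \<omega>(t)/t \<le> 2 \<omega>(s)/s. Hence the integrand on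
  the window is pointwise at most twice the reflected integrand on [0, a], and the
  bound transfers with C' = 2C.\<close>

lemma modulus_type_nonneg:
  assumes "modulus_type \<omega>" "0 \<le> t" "t \<le> 2 * pi"
  shows "0 \<le> \<omega> t"
  using assms mono_onD[of "{0..2*pi}" \<omega> 0 t] unfolding modulus_type_def by auto

lemma modulus_type_mult_le:
  assumes \<omega>: "modulus_type \<omega>" and "0 \<le> s" "1 \<le> k" "real k * s \<le> 2 * pi"
  shows "\<omega> (real k * s) \<le> real k * \<omega> s"
  using assms(3,4)
proof (induction k rule: dec_induct)
  case base
  then show ?case by simp
next
  case (step k)
  have "real k * s + s \<le> 2 * pi"
    using step.prems by (simp add: algebra_simps)
  moreover have "s \<le> real k * s"
    using step.hyps \<open>0 \<le> s\<close> by (simp add: mult_le_cancel_right1)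
  ultimately have "\<omega> (s + real k * s) \<le> \<omega> s + \<omega> (real k * s)"
    using \<omega> \<open>0 \<le> s\<close> unfolding modulus_type_def by (auto simp: add.commute)
  also have "\<dots> \<le> \<omega> s + real k * \<omega> s"
    using step.IH \<open>real k * s + s \<le> 2 * pi\<close> \<open>0 \<le> s\<close> by simp
  finally show ?case by (simp add: algebra_simps)
qed

text \<open>Cover t by k = \<lceil>t/s\<rceil> \<le> 2t/s steps of length s; the constraint
  t \<le> pi keeps k s < t + s inside the domain [0, 2 pi].\<close>
lemma modulus_type_quotient_le:
  assumes \<omega>: "modulus_type \<omega>" and "0 < s" "s \<le> t" "t \<le> pi"
  shows "\<omega> t / t \<le> 2 * \<omega> s / s"
proof -
  define k where "k = nat \<lceil>t / s\<rceil>"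
  have "1 \<le> t / s" using assms by simp
  then have k: "t / s \<le> real k" "real k < t / s + 1" "1 \<le> k"
    unfolding k_def by linarith+
  then have "t \<le> real k * s" "real k * s \<le> 2 * pi"
    using assms by (auto simp: field_simps)
  have "\<omega> t \<le> \<omega> (real k * s)"
    using \<omega> \<open>t \<le> real k * s\<close> \<open>real k * s \<le> 2 * pi\<close> assms
    unfolding modulus_type_def by (auto intro: mono_onD)
  also have "\<dots> \<le> real k * \<omega> s"
    using modulus_type_mult_le assms k \<open>real k * s \<le> 2 * pi\<close> by auto
  also have "\<dots> \<le> (2 * (t / s)) * \<omega> s"
    using k \<open>1 \<le> t / s\<close> modulus_type_nonneg[OF \<omega>, of s] assms
    by (intro mult_right_mono) linarith+
  finally show ?thesis
    using assms by (simp add: field_simps)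
qed

lemma modulus_type_weighted_measurable:
  assumes "modulus_type \<omega>" "S \<subseteq> {0..2*pi}" "closed S"
    and [measurable]: "h \<in> borel_measurable borel"
  shows "(\<lambda>t. \<omega> t / h t * indicator S t) \<in> borel_measurable borel"
proof -
  have "continuous_on S \<omega>"
    using assms unfolding modulus_type_def by (auto intro: continuous_on_subset)
  from borel_measurable_continuous_on_indicator[OF _ this] assms(3)
  have [measurable]: "(\<lambda>t. indicator S t * \<omega> t) \<in> borel_measurable borel"
    by (simp add: borel_closed)
  have "(\<lambda>t. \<omega> t / h t * indicator S t) = (\<lambda>t. indicator S t * \<omega> t / h t)"
    by (auto simp: indicator_def)
  then show ?thesis by simp
qed

lemma AE_lborel_reflect:
  fixes t0 :: real
  shows "(AE x in lborel. P (t0 - x)) \<longleftrightarrow> (AE x in lborel. P x)"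
proof -
  have reflect: "AE x in lborel. Q (t0 - x)" if "AE x in lborel. Q x" for Q
  proof -
    have "distr lborel borel (\<lambda>x. t0 - x) = lborel"
      using lborel_real_affine[of "-1" t0] by (simp add: density_1)
    with that have "AE x in distr lborel borel (\<lambda>x. t0 - x). Q x" by (simp only:)
    then show ?thesis by (rule AE_distrD[rotated]) simp
  qed
  show ?thesis
  proof
    assume "AE x in lborel. P (t0 - x)"
    from reflect[OF this] show "AE x in lborel. P x" by simp
  qed (rule reflect)
qed

lemma esssup_lborel_reflect:
  fixes t0 :: real and f :: "real \<Rightarrow> ennreal"
  assumes [measurable]: "f \<in> borel_measurable borel"
  shows "esssup lborel (\<lambda>x. f (t0 - x)) = esssup lborel f"
  by (simp add: esssup_eq_AE AE_lborel_reflect[where P = "\<lambda>x. f x \<le> z" for z])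

lemma nn_integral_lborel_reflect:
  fixes t0 :: real
  assumes "f \<in> borel_measurable borel"
  shows "(\<integral>\<^sup>+x. f (t0 - x) \<partial>lborel) = (\<integral>\<^sup>+x. f x \<partial>lborel)"
  using nn_integral_real_affine[OF assms, of "-1" t0] by simp

lemma ennreal_mult_indicator: "ennreal x * indicator S t = ennreal (x * indicator S t)"
  by (simp add: indicator_def)

lemma powr_mult_indicator: "x powr q * indicator S t = (x * indicator S t) powr q"
  by (simp add: indicator_def)

lemma Lq_norm_reflect:
  fixes t0 :: real
  assumes [measurable]: "(\<lambda>t. g t * indicator S t) \<in> borel_measurable borel"
  shows "Lq_norm p {t. t0 - t \<in> S} (\<lambda>t. g (t0 - t)) = Lq_norm p S g"
proof -
  have ind: "indicator {t. t0 - t \<in> S} t = (indicator S (t0 - t) :: ennreal)" for t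
    by (simp add: indicator_def)
  have "esssup lborel (\<lambda>t. ennreal (g (t0 - t)) * indicator {t. t0 - t \<in> S} t)
      = esssup lborel (\<lambda>t. ennreal (g t) * indicator S t)"
    unfolding ind ennreal_mult_indicator by (rule esssup_lborel_reflect) measurable
  moreover have "(\<integral>\<^sup>+t. ennreal (g (t0 - t) powr q) * indicator {t. t0 - t \<in> S} t \<partial>lborel)
      = (\<integral>\<^sup>+t. ennreal (g t powr q) * indicator S t \<partial>lborel)" for q
    unfolding ind ennreal_mult_indicator powr_mult_indicator
    by (rule nn_integral_lborel_reflect) measurable
  ultimately show ?thesis
    unfolding Lq_norm_def by simp
qed

definition enn_root :: "real \<Rightarrow> ennreal \<Rightarrow> ennreal" where
  "enn_root q I = (if I = \<infinity> then \<infinity> else ennreal (enn2real I powr (1 / q)))"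

lemma Lq_norm_eq_enn_root:
  "p \<noteq> 1 \<Longrightarrow> Lq_norm p S g =
     enn_root (p / (p - 1)) (\<integral>\<^sup>+t. ennreal (g t powr (p / (p - 1))) * indicator S t \<partial>lborel)"
  by (simp add: Lq_norm_def enn_root_def Let_def)

lemma enn_root_le_cmult:
  assumes c: "0 < c" and q: "0 < q" and le: "I \<le> ennreal (c powr q) * J"
  shows "enn_root q I \<le> ennreal c * enn_root q J"
proof (cases "J = \<infinity>")
  case True
  then show ?thesis using c by (simp add: enn_root_def ennreal_mult_top)
next
  case False
  then have "I \<noteq> \<infinity>"
    using le by (auto simp: ennreal_mult_eq_top_iff top_unique)
  have "enn2real I \<le> enn2real (ennreal (c powr q) * J)"
    using le False by (intro enn2real_mono) (simp_all add: ennreal_mult_less_top less_top)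
  then have "enn2real I powr (1 / q) \<le> (c powr q * enn2real J) powr (1 / q)"
    using q by (intro powr_mono2) (auto simp: enn2real_mult)
  also have "\<dots> = c * enn2real J powr (1 / q)"
    using c q by (simp add: powr_mult powr_powr)
  finally show ?thesis
    using \<open>I \<noteq> \<infinity>\<close> False c by (simp add: enn_root_def ennreal_mult'[symmetric] ennreal_leI)
qed

lemma Lq_norm_le_cmult:
  assumes p: "1 \<le> p" and c: "0 < c"
    and [measurable]: "(\<lambda>t. g t * indicator S t) \<in> borel_measurable borel"
      "(\<lambda>t. h t * indicator S t) \<in> borel_measurable borel"
    and g: "\<And>t. t \<in> S \<Longrightarrow> 0 \<le> g t" "\<And>t. t \<in> S \<Longrightarrow> g t \<le> c * h t"
  shows "Lq_norm p S g \<le> ennreal c * Lq_norm p S h"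
proof (cases "p = 1")
  case True
  have pointwise: "ennreal (g t * indicator S t) \<le> ennreal c * ennreal (h t * indicator S t)" for t
    using g[of t] c by (auto simp: indicator_def ennreal_mult'[symmetric] intro: ennreal_leI)
  have "AE t in lborel. ennreal (g t * indicator S t)
          \<le> ennreal c * esssup lborel (\<lambda>t. ennreal (h t * indicator S t))"
    using esssup_AE[of "\<lambda>t. ennreal (h t * indicator S t)" lborel]
    by eventually_elim (rule order_trans[OF pointwise mult_left_mono]; simp)
  then have "esssup lborel (\<lambda>t. ennreal (g t * indicator S t))
      \<le> ennreal c * esssup lborel (\<lambda>t. ennreal (h t * indicator S t))"
    by (intro esssup_I) measurable
  then show ?thesis
    using True unfolding Lq_norm_def ennreal_mult_indicator by simp
next
  case False
  define q where "q = p / (p - 1)"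
  have q: "0 < q" using False p unfolding q_def by simp
  have "ennreal (g t powr q) * indicator S t
      \<le> ennreal (c powr q) * (ennreal (h t powr q) * indicator S t)" for t
  proof (cases "t \<in> S")
    case True
    have "0 \<le> h t" using g[OF True] c by (metis order_trans zero_le_mult_iff not_less)
    have "g t powr q \<le> (c * h t) powr q" using g[OF True] q by (intro powr_mono2) auto
    also have "\<dots> = c powr q * h t powr q" using c \<open>0 \<le> h t\<close> by (simp add: powr_mult)
    finally show ?thesis using True by (simp add: ennreal_mult'[symmetric] ennreal_leI)
  qed simp
  then have "(\<integral>\<^sup>+t. ennreal (g t powr q) * indicator S t \<partial>lborel)
      \<le> ennreal (c powr q) * (\<integral>\<^sup>+t. ennreal (h t powr q) * indicator S t \<partial>lborel)"
    unfolding ennreal_mult_indicator powr_mult_indicator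
    by (subst nn_integral_cmult[symmetric]) (auto intro: nn_integral_mono)
  then show ?thesis
    using False c q by (simp add: Lq_norm_eq_enn_root q_def[symmetric] enn_root_le_cmult)
qed

lemma abs_sin_multiple_pi_minus: "\<bar>sin (real k * pi - x)\<bar> = \<bar>sin x\<bar>"
  by (simp add: sin_diff abs_mult)

lemma reflection_point_bounds:
  fixes r m :: nat
  assumes "2 * (m + 1) \<le> r"
  shows "2 * pi / r \<le> 2 * (real m + 1) * pi / r" "2 * (real m + 1) * pi / r \<le> pi"
proof -
  have "real (2 * (m + 1)) \<le> real r"
    using assms by (rule of_nat_mono)
  then have "2 * (real m + 1) * pi \<le> real r * pi"
    by (intro mult_right_mono) auto
  moreover have "0 < real r"
    using assms by simp
  ultimately show "2 * (real m + 1) * pi / r \<le> pi"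
    by (simp add: pos_divide_le_eq mult.commute)
  show "2 * pi / r \<le> 2 * (real m + 1) * pi / r"
    by (intro divide_right_mono) auto
qed

text \<open>At s = 0 both sides vanish, because 0 powr \<beta> = 0 and x / 0 = 0.\<close>
lemma reflected_weight_le:
  fixes r m :: nat
  assumes \<omega>: "modulus_type \<omega>" and m: "2 * (m + 1) \<le> r" and s: "0 \<le> s" "s \<le> pi / r"
  defines "t \<equiv> 2 * (real m + 1) * pi / real r - s"
  shows "\<omega> t / (t * \<bar>sin (real r * t / 2)\<bar> powr \<beta>)
           \<le> 2 * (\<omega> s / (s * sin (real r * s / 2) powr \<beta>))"
proof -
  have r: "2 \<le> real r"
    using m by simp
  have "pi / r \<le> t" "t \<le> pi"
    using reflection_point_bounds[OF m] s unfolding t_def by simp_all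
  have "real r * s \<le> pi"
    using r s by (simp add: field_simps)
  then have "real r * s / 2 \<le> pi"
    using pi_gt_zero by linarith
  then have "sin (real r * s / 2) \<ge> 0"
    using s by (intro sin_ge_zero) auto
  moreover have "real r * t / 2 = real (Suc m) * pi - real r * s / 2"
    using r unfolding t_def by (simp add: field_simps)
  ultimately have sin: "\<bar>sin (real r * t / 2)\<bar> = sin (real r * s / 2)"
    by (simp only: abs_sin_multiple_pi_minus abs_of_nonneg)
  show ?thesis
  proof (cases "s = 0")
    case False
    then have "\<omega> t / t \<le> 2 * \<omega> s / s"
      using modulus_type_quotient_le[OF \<omega>] s \<open>pi / r \<le> t\<close> \<open>t \<le> pi\<close> by simp
    then show ?thesis
      unfolding sin by (simp add: divide_right_mono flip: divide_divide_eq_left)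
  qed (simp add: sin)
qed

lemma Lq_norm_reflected_window_le:
  fixes r m :: nat
  assumes p: "1 \<le> p" and \<omega>: "modulus_type \<omega>" and m: "2 * (m + 1) \<le> r"
    and a: "0 \<le> a" "a \<le> pi / r"
  defines "t0 \<equiv> 2 * (real m + 1) * pi / real r"
  shows "Lq_norm p {t0 - a .. t0} (\<lambda>t. \<omega> t / (t * \<bar>sin (real r * t / 2)\<bar> powr \<beta>))
         \<le> ennreal 2 * Lq_norm p {0 .. a} (\<lambda>t. \<omega> t / (t * sin (real r * t / 2) powr \<beta>))"
    (is "Lq_norm p _ ?g \<le> _ * Lq_norm p _ ?h")
proof -
  have "2 \<le> r" using m by simp
  then have "pi / r \<le> pi / 2"
    by (intro divide_left_mono) auto
  moreover have "2 * pi / r \<le> t0" "t0 \<le> pi"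
    using m unfolding t0_def by (rule reflection_point_bounds)+
  moreover have "2 * pi / r = pi / r + pi / r"
    by simp
  ultimately have "a \<le> pi" "0 \<le> t0 - a" "t0 \<le> pi"
    using a pi_gt_zero by linarith+
  then have measurable_h [measurable]: "(\<lambda>t. ?h t * indicator {0..a} t) \<in> borel_measurable borel"
    and measurable_g: "(\<lambda>t. ?g t * indicator {t0 - a..t0} t) \<in> borel_measurable borel"
    by (intro modulus_type_weighted_measurable[OF \<omega>]; simp; measurable)+
  have window: "{t. t0 - t \<in> {0..a}} = {t0 - a..t0}"
    by auto
  have "(\<lambda>t. ?h (t0 - t) * indicator {0..a} (t0 - t)) \<in> borel_measurable borel"
    by measurable
  moreover have "indicator {0..a} (t0 - t) = (indicator {t0 - a..t0} t :: real)" for t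
    by (auto simp: indicator_def)
  ultimately have measurable_h_reflected:
    "(\<lambda>t. ?h (t0 - t) * indicator {t0 - a..t0} t) \<in> borel_measurable borel"
    by simp
  have "Lq_norm p {t0 - a..t0} ?g \<le> ennreal 2 * Lq_norm p {t0 - a..t0} (\<lambda>t. ?h (t0 - t))"
  proof (rule Lq_norm_le_cmult[OF p _ measurable_g measurable_h_reflected])
    fix t assume t: "t \<in> {t0 - a..t0}"
    then show "0 \<le> ?g t"
      using modulus_type_nonneg[OF \<omega>, of t] \<open>0 \<le> t0 - a\<close> \<open>t0 \<le> pi\<close> by simp
    have "0 \<le> t0 - t" "t0 - t \<le> pi / r"
      using t a by auto
    from reflected_weight_le[OF \<omega> m this, of \<beta>]
    show "?g t \<le> 2 * ?h (t0 - t)"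
      unfolding t0_def[symmetric] by simp
  qed simp
  also have "Lq_norm p {t0 - a..t0} (\<lambda>t. ?h (t0 - t)) = Lq_norm p {0..a} ?h"
    using Lq_norm_reflect[OF measurable_h, of p t0] unfolding window .
  finally show ?thesis .
qed

theorem lemma6:
  fixes p \<beta> :: real and r :: nat and \<omega> :: "real \<Rightarrow> real" and C :: real
  assumes p: "1 \<le> p"
    and r: "r \<ge> 2"
    and \<omega>: "modulus_type \<omega>"
    and hyp: "\<And>n::nat. Lq_norm p {0 .. pi / (real r * (real n + 1))}
                 (\<lambda>t. \<omega> t / (t * sin (real r * t / 2) powr \<beta>))
               \<le> ennreal (C * (real n + 1) powr (\<beta> + 1 / p) * \<omega> (pi / (real n + 1)))"
  shows "\<forall>m::nat. m < r div 2 \<longrightarrow> (\<exists>C'::real. \<forall>n::nat.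
           Lq_norm p {2 * (real m + 1) * pi / real r - pi / (real r * (real n + 1))
                      .. 2 * (real m + 1) * pi / real r}
             (\<lambda>t. \<omega> t / (t * \<bar>sin (real r * t / 2)\<bar> powr \<beta>))
           \<le> ennreal (C' * (real n + 1) powr (\<beta> + 1 / p) * \<omega> (pi / (real n + 1))))"
proof (intro allI impI exI[of _ "2 * C"] order_trans[OF Lq_norm_reflected_window_le[OF p \<omega>]])
  fix m n :: nat
  show "2 * (m + 1) \<le> r" if "m < r div 2"
    using that by presburger
  show "0 \<le> pi / (real r * (real n + 1))"
    by simp
  have "real r * 1 \<le> real r * (real n + 1)"
    by (intro mult_left_mono) auto
  then show "pi / (real r * (real n + 1)) \<le> pi / real r"
    using r by (intro divide_left_mono) auto
  show "ennreal 2 * Lq_norm p {0 .. pi / (real r * (real n + 1))}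
          (\<lambda>t. \<omega> t / (t * sin (real r * t / 2) powr \<beta>))
        \<le> ennreal (2 * C * (real n + 1) powr (\<beta> + 1 / p) * \<omega> (pi / (real n + 1)))"
    using mult_left_mono[OF hyp[of n], of "ennreal 2"]
    by (simp add: ennreal_mult'[of 2, simplified] mult.assoc)
qed

end
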